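(* For every $\varepsilon>0$ there exist a graph $G$ and an induced subgraph $H$ of $G$ such that $\operatorname{cdim}(H)>0$ and \[ \frac{\operatorname{cdim}(G)}{\operatorname{cdim}(H)}\leq \varepsilon. \]
   Context: All graphs are finite, simple, undirected and nonempty. For distinct vertices $v,w$, $\kappa(v,w)$ is the maximum number of internally vertex-disjoint $v$–$w$ paths (an edge $vw$ counts as one such path); $\kappa(v,v)=\infty$. For an ordered vertex set $W=(w_1,\ldots,w_k)$, $r_G(v,W)=[\kappa(v,w_1),\ldots,\kappa(v,w_k)]$. $W$ is resolving if $r_G(v_1,W)=r_G(v_2,W)$ implies $v_1=v_2$. The connectivity dimension $\operatorname{cdim}(G)$ is the minimum cardinality of a resolving set. *)

theory Defs
  imports Main "HOL-Library.Extended_Nat"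
begin

record 'a sgraph =
  verts :: "'a set"
  edges :: "'a set set"

definition is_graph :: "'a sgraph \<Rightarrow> bool" where
  "is_graph G \<longleftrightarrow> finite (verts G) \<and> verts G \<noteq> {} \<and>
     edges G \<subseteq> {{u, v} | u v. u \<in> verts G \<and> v \<in> verts G \<and> u \<noteq> v}"

definition adj :: "'a sgraph \<Rightarrow> 'a \<Rightarrow> 'a \<Rightarrow> bool" where
  "adj G u v \<longleftrightarrow> {u, v} \<in> edges G"

definition is_path :: "'a sgraph \<Rightarrow> 'a \<Rightarrow> 'a \<Rightarrow> 'a list \<Rightarrow> bool" where
  "is_path G v w p \<longleftrightarrow> p \<noteq> [] \<and> distinct p \<and> hd p = v \<and> last p = w \<and>
     set p \<subseteq> verts G \<and> (\<forall>i. Suc i < length p \<longrightarrow> adj G (p ! i) (p ! Suc i))"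

definition interior :: "'a list \<Rightarrow> 'a set" where
  "interior p = set (butlast (tl p))"

definition int_disjoint_paths :: "'a sgraph \<Rightarrow> 'a \<Rightarrow> 'a \<Rightarrow> 'a list set \<Rightarrow> bool" where
  "int_disjoint_paths G v w P \<longleftrightarrow> (\<forall>p\<in>P. is_path G v w p) \<and>
     (\<forall>p\<in>P. \<forall>q\<in>P. p \<noteq> q \<longrightarrow> interior p \<inter> interior q = {})"

definition kappa :: "'a sgraph \<Rightarrow> 'a \<Rightarrow> 'a \<Rightarrow> enat" where
  "kappa G v w = (if v = w then \<infinity>
     else Sup {enat (card P) | P. finite P \<and> int_disjoint_paths G v w P})"

text \<open>Resolving set (the order of W is irrelevant for the resolving property).\<close>
definition resolving :: "'a sgraph \<Rightarrow> 'a set \<Rightarrow> bool" where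
  "resolving G W \<longleftrightarrow> W \<subseteq> verts G \<and>
     (\<forall>v1\<in>verts G. \<forall>v2\<in>verts G. (\<forall>w\<in>W. kappa G v1 w = kappa G v2 w) \<longrightarrow> v1 = v2)"

definition cdim :: "'a sgraph \<Rightarrow> nat" where
  "cdim G = (LEAST k. \<exists>W. resolving G W \<and> card W = k)"

definition induced_subgraph :: "'a sgraph \<Rightarrow> 'a sgraph \<Rightarrow> bool" where
  "induced_subgraph H G \<longleftrightarrow> verts H \<noteq> {} \<and> verts H \<subseteq> verts G \<and>
     edges H = {e \<in> edges G. e \<subseteq> verts H}"

end

theory Submission imports Defs begin

text \<open>Let \<open>G\<^sub>k\<close> have vertices \<open>0, \<dots>, 2k\<close>, where \<open>0\<close> is adjacent to all other vertices and
  \<open>i, j \<ge> 1\<close> are adjacent iff \<open>i + j > 2k\<close>. Since \<open>0\<close> is a dominating vertex, \<open>\<kappa>(v, 0)\<close> is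
  the degree of \<open>v\<close>: the neighbours of \<open>v\<close> give that many internally disjoint paths of length
  at most two, and distinct internally disjoint paths leave \<open>v\<close> through distinct neighbours.
  The degree of \<open>i \<ge> 1\<close> is \<open>i + 1\<close> for \<open>i \<le> k\<close> and \<open>i\<close> for \<open>i > k\<close>, which separates all
  vertices except \<open>k\<close> and \<open>k + 1\<close>; adding \<open>k\<close> as a landmark gives \<open>cdim(G\<^sub>k) \<le> 2\<close>.
  The vertices \<open>1, \<dots>, k\<close> induce an edgeless graph, in which all vertices outside a resolving
  set have the representation \<open>[0, \<dots>, 0]\<close>, so its connectivity dimension is at least
  \<open>k - 1\<close>.\<close>

definition neighbours :: "'a sgraph \<Rightarrow> 'a \<Rightarrow> 'a set" where
  "neighbours G v = {u. adj G v u}"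

lemma adj_in_verts:
  assumes "is_graph G" "adj G u v"
  shows "u \<in> verts G" "v \<in> verts G" "u \<noteq> v"
  using assms unfolding is_graph_def adj_def by (auto simp: doubleton_eq_iff)

lemma finite_neighbours:
  assumes "is_graph G"
  shows "finite (neighbours G v)"
proof -
  have "neighbours G v \<subseteq> verts G"
    using adj_in_verts(2)[OF assms] by (auto simp: neighbours_def)
  then show ?thesis using assms unfolding is_graph_def by (blast intro: finite_subset)
qed

lemma is_path_length_ge_2:
  assumes "is_path G u w p" "u \<noteq> w"
  shows "2 \<le> length p"
proof -
  have "p \<noteq> []" "hd p = u" "last p = w" using assms(1) unfolding is_path_def by auto
  then show ?thesis using assms(2) by (cases p; cases "tl p") auto
qed

lemma is_path_nth_0: "is_path G u w p \<Longrightarrow> p ! 0 = u"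
  unfolding is_path_def by (metis hd_conv_nth)

lemma is_path_adj_nth_1:
  assumes "is_path G u w p" "u \<noteq> w"
  shows "adj G u (p ! 1)"
proof -
  have "Suc 0 < length p" using is_path_length_ge_2[OF assms] by simp
  then have "adj G (p ! 0) (p ! 1)" using assms(1) unfolding is_path_def by simp
  then show ?thesis using is_path_nth_0[OF assms(1)] by simp
qed

lemma is_path_nth_1_eq_target:
  assumes p: "is_path G u w p" and "u \<noteq> w" "p ! 1 = w"
  shows "p = [u, w]"
proof -
  have len: "2 \<le> length p" using is_path_length_ge_2[OF p assms(2)] .
  have P: "p \<noteq> []" "distinct p" "last p = w" using p unfolding is_path_def by blast+
  have "p ! 1 = p ! (length p - 1)" using P assms(3) by (simp add: last_conv_nth)
  then have "length p = 2" using P(2) len by (simp add: nth_eq_iff_index_eq)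
  then obtain x y where "p = [x, y]" by (auto simp: length_Suc_conv numeral_2_eq_2)
  then show ?thesis using is_path_nth_0[OF p] assms(3) by simp
qed

lemma is_path_nth_1_in_interior:
  assumes p: "is_path G u w p" and "u \<noteq> w" "p ! 1 \<noteq> w"
  shows "p ! 1 \<in> interior p"
proof -
  have P: "p \<noteq> []" "last p = w" using p unfolding is_path_def by blast+
  then have "length p \<noteq> 2" using assms(3) by (auto simp: last_conv_nth)
  then have "3 \<le> length p" using is_path_length_ge_2[OF p assms(2)] by simp
  then have "butlast (tl p) ! 0 = p ! 1" "0 < length (butlast (tl p))"
    by (simp_all add: nth_butlast nth_tl)
  then show ?thesis unfolding interior_def by (metis nth_mem)
qed

lemma kappa_le_card_neighbours:
  assumes G: "is_graph G" and uw: "u \<noteq> w"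
  shows "kappa G u w \<le> enat (card (neighbours G u))"
proof -
  have "card P \<le> card (neighbours G u)" if P: "int_disjoint_paths G u w P" for P
  proof -
    have paths: "\<And>p. p \<in> P \<Longrightarrow> is_path G u w p"
      using P unfolding int_disjoint_paths_def by blast
    have "inj_on (\<lambda>p. p ! 1) P"
    proof (rule inj_onI)
      fix p q assume pq: "p \<in> P" "q \<in> P" "p ! 1 = q ! 1"
      show "p = q"
      proof (cases "p ! 1 = w")
        case True
        then have "q ! 1 = w" using pq(3) by simp
        then show ?thesis
          using is_path_nth_1_eq_target[OF paths[OF pq(1)] uw True]
            is_path_nth_1_eq_target[OF paths[OF pq(2)] uw] by simp
      next
        case False
        have "p ! 1 \<in> interior p"
          using is_path_nth_1_in_interior[OF paths[OF pq(1)] uw False] .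
        moreover have "q ! 1 \<in> interior q"
          using is_path_nth_1_in_interior[OF paths[OF pq(2)] uw] False pq(3) by simp
        moreover have "p \<noteq> q \<Longrightarrow> interior p \<inter> interior q = {}"
          using P pq(1,2) unfolding int_disjoint_paths_def by blast
        ultimately show ?thesis using pq(3) by (metis disjoint_iff)
      qed
    qed
    moreover have "(\<lambda>p. p ! 1) ` P \<subseteq> neighbours G u"
      using is_path_adj_nth_1[OF paths uw] by (auto simp: neighbours_def)
    ultimately show ?thesis using finite_neighbours[OF G] by (meson card_inj_on_le)
  qed
  then show ?thesis unfolding kappa_def using uw by (auto intro!: Sup_least)
qed

lemma kappa_eq_infinity_iff:
  assumes "is_graph G"
  shows "kappa G u w = \<infinity> \<longleftrightarrow> u = w"
proof (cases "u = w")
  case False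
  then show ?thesis
    using kappa_le_card_neighbours[OF assms False] by (cases "kappa G u w") auto
qed (simp add: kappa_def)

lemma card_neighbours_le_kappa:
  assumes G: "is_graph G" and vw: "v \<noteq> w" "v \<in> verts G" "w \<in> verts G"
    and common: "\<And>u. adj G v u \<Longrightarrow> u \<noteq> w \<Longrightarrow> adj G u w"
  shows "enat (card (neighbours G v)) \<le> kappa G v w"
proof -
  define path where "path u = (if u = w then [v, w] else [v, u, w])" for u
  have "inj_on path (neighbours G v)"
    unfolding path_def by (rule inj_onI) (auto split: if_splits)
  then have card: "card (path ` neighbours G v) = card (neighbours G v)"
    by (simp add: card_image)
  have "is_path G v w (path u)" if vu: "adj G v u" for u
  proof (cases "u = w")
    case True
    then show ?thesis using vu vw unfolding path_def is_path_def by auto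
  next
    case False
    have "adj G u w" "u \<in> verts G" "u \<noteq> v"
      using common[OF vu False] adj_in_verts[OF G vu] by auto
    then show ?thesis using vu vw False unfolding path_def is_path_def
      by (auto simp: less_Suc_eq nth_Cons split: nat.splits)
  qed
  moreover have "interior (path u) \<inter> interior (path u') = {}" if "path u \<noteq> path u'" for u u'
    using that unfolding path_def interior_def by auto
  ultimately have "int_disjoint_paths G v w (path ` neighbours G v)"
    unfolding int_disjoint_paths_def neighbours_def by blast
  moreover have "finite (path ` neighbours G v)" using finite_neighbours[OF G] by simp
  ultimately have "enat (card (neighbours G v))
      \<in> {enat (card P) | P. finite P \<and> int_disjoint_paths G v w P}"
    using card by force
  then show ?thesis unfolding kappa_def using vw(1) by (simp add: Sup_upper)
qed

lemma kappa_dominating_vertex: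
  assumes G: "is_graph G" and w: "w \<in> verts G" "\<And>u. u \<in> verts G \<Longrightarrow> u \<noteq> w \<Longrightarrow> adj G u w"
    and v: "v \<in> verts G" "v \<noteq> w"
  shows "kappa G v w = enat (card (neighbours G v))"
proof (rule order_antisym)
  show "kappa G v w \<le> enat (card (neighbours G v))"
    by (rule kappa_le_card_neighbours[OF G v(2)])
  show "enat (card (neighbours G v)) \<le> kappa G v w"
    using w(2) adj_in_verts(2)[OF G] by (intro card_neighbours_le_kappa[OF G v(2) v(1) w(1)]) blast
qed

lemma kappa_edgeless:
  assumes "edges G = {}" "u \<noteq> w"
  shows "kappa G u w = 0"
proof -
  have "int_disjoint_paths G u w P \<longleftrightarrow> P = {}" for P
    using is_path_adj_nth_1[OF _ assms(2)] assms(1)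
    unfolding int_disjoint_paths_def adj_def by blast
  then have "{enat (card P) | P. finite P \<and> int_disjoint_paths G u w P} = {0}"
    by (auto simp: zero_enat_def)
  then show ?thesis unfolding kappa_def using assms by simp
qed

lemma resolving_verts: "is_graph G \<Longrightarrow> resolving G (verts G)"
  unfolding resolving_def by (metis kappa_def kappa_eq_infinity_iff order_refl)

lemma cdim_le_card: "resolving G W \<Longrightarrow> cdim G \<le> card W"
  unfolding cdim_def by (rule Least_le) blast

lemma le_cdimI:
  assumes "is_graph G" "\<And>W. resolving G W \<Longrightarrow> n \<le> card W"
  shows "n \<le> cdim G"
proof -
  have "\<exists>W. resolving G W \<and> card W = cdim G"
    unfolding cdim_def using resolving_verts[OF assms(1)] by (rule_tac LeastI_ex) blast
  then show ?thesis using assms(2) by metis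
qed

lemma card_verts_le_cdim_edgeless:
  assumes G: "is_graph G" and "edges G = {}"
  shows "card (verts G) - 1 \<le> cdim G"
proof (rule le_cdimI[OF G])
  fix W assume W: "resolving G W"
  have fin: "finite (verts G)" using G by (simp add: is_graph_def)
  have "a = b" if "a \<in> verts G - W" "b \<in> verts G - W" for a b
    using W that kappa_edgeless[OF assms(2)] unfolding resolving_def by (metis DiffE)
  then have "card (verts G - W) \<le> 1"
    using fin by (simp add: card_le_Suc0_iff_eq)
  moreover have "card (verts G - W) = card (verts G) - card W"
    using W fin unfolding resolving_def by (meson card_Diff_subset finite_subset)
  ultimately show "card (verts G) - 1 \<le> card W" by linarith
qed

definition edgeless_graph :: "'a set \<Rightarrow> 'a sgraph" where
  "edgeless_graph V = \<lparr>verts = V, edges = {}\<rparr>"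

definition threshold_graph :: "nat \<Rightarrow> nat sgraph" where
  "threshold_graph k = \<lparr>verts = {0..2*k},
     edges = {{i, j} | i j. i \<noteq> j \<and> i \<le> 2*k \<and> j \<le> 2*k \<and> (i = 0 \<or> j = 0 \<or> 2*k < i + j)}\<rparr>"

lemma adj_threshold_graph:
  "adj (threshold_graph k) u v \<longleftrightarrow> u \<noteq> v \<and> u \<le> 2*k \<and> v \<le> 2*k \<and> (u = 0 \<or> v = 0 \<or> 2*k < u + v)"
  unfolding adj_def threshold_graph_def by (auto simp: doubleton_eq_iff)

lemma verts_threshold_graph: "verts (threshold_graph k) = {0..2*k}"
  by (simp add: threshold_graph_def)

lemma is_graph_threshold_graph: "is_graph (threshold_graph k)"
  unfolding is_graph_def threshold_graph_def by auto

lemma is_graph_edgeless_graph: "finite V \<Longrightarrow> V \<noteq> {} \<Longrightarrow> is_graph (edgeless_graph V)"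
  unfolding is_graph_def edgeless_graph_def by simp

lemma induced_subgraph_edgeless_threshold_graph:
  "1 \<le> k \<Longrightarrow> induced_subgraph (edgeless_graph {1..k}) (threshold_graph k)"
  unfolding induced_subgraph_def edgeless_graph_def threshold_graph_def by auto

lemma card_neighbours_threshold_graph:
  assumes "1 \<le> i" "i \<le> 2*k"
  shows "card (neighbours (threshold_graph k) i) = (if k < i then i else i + 1)"
proof -
  have "neighbours (threshold_graph k) i = insert 0 ({2*k+1-i..2*k} - {i})"
    using assms by (auto simp: neighbours_def adj_threshold_graph)
  moreover have "i \<in> {2*k+1-i..2*k} \<longleftrightarrow> k < i" using assms by auto
  ultimately show ?thesis using assms by auto
qed

lemma kappa_threshold_graph_0:
  assumes "1 \<le> i" "i \<le> 2*k"
  shows "kappa (threshold_graph k) i 0 = enat (if k < i then i else i + 1)"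
proof -
  have "kappa (threshold_graph k) i 0 = enat (card (neighbours (threshold_graph k) i))"
    using assms by (intro kappa_dominating_vertex[OF is_graph_threshold_graph])
      (auto simp: verts_threshold_graph adj_threshold_graph)
  then show ?thesis using card_neighbours_threshold_graph[OF assms] by simp
qed

lemma resolving_threshold_graph: "resolving (threshold_graph k) {0, k}"
  unfolding resolving_def
proof (intro conjI ballI impI)
  show "{0, k} \<subseteq> verts (threshold_graph k)" by (auto simp: verts_threshold_graph)
  fix v1 v2 assume v: "v1 \<in> verts (threshold_graph k)" "v2 \<in> verts (threshold_graph k)"
    and eq: "\<forall>w\<in>{0, k}. kappa (threshold_graph k) v1 w = kappa (threshold_graph k) v2 w"
  show "v1 = v2"
  proof (cases "v1 \<in> {0, k} \<or> v2 \<in> {0, k}")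
    case True
    then show ?thesis
      using eq kappa_eq_infinity_iff[OF is_graph_threshold_graph] by metis
  next
    case False
    then have "1 \<le> v1" "v1 \<le> 2*k" "1 \<le> v2" "v2 \<le> 2*k"
      using v by (auto simp: verts_threshold_graph)
    then have "(if k < v1 then v1 else v1 + 1) = (if k < v2 then v2 else v2 + 1)"
      using eq kappa_threshold_graph_0 by simp
    then show ?thesis using False by (auto split: if_splits)
  qed
qed

theorem mainTheorem6:
  fixes \<epsilon> :: real
  assumes "\<epsilon> > 0"
  shows "\<exists>(G :: nat sgraph) H. is_graph G \<and> is_graph H \<and> induced_subgraph H G \<and>
           cdim H > 0 \<and> real (cdim G) / real (cdim H) \<le> \<epsilon>"
proof -
  define k where "k = nat \<lceil>2 / \<epsilon>\<rceil> + 2"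
  let ?G = "threshold_graph k" and ?H = "edgeless_graph {1..k}"
  have k: "1 \<le> k" "2 / \<epsilon> \<le> real k - 1" unfolding k_def by linarith+
  have H: "is_graph ?H" using k(1) by (simp add: is_graph_edgeless_graph)
  have "card {0, k} \<le> 2" by (simp add: card_insert_if)
  then have cdim_G: "real (cdim ?G) \<le> 2"
    using cdim_le_card[OF resolving_threshold_graph, of k] by simp
  have "k - 1 \<le> cdim ?H"
    using card_verts_le_cdim_edgeless[OF H] by (simp add: edgeless_graph_def)
  then have cdim_H: "2 / \<epsilon> \<le> real (cdim ?H)"
    using k by linarith
  then have "0 < cdim ?H" using assms by (metis of_nat_0_less_iff zero_less_divide_iff
      zero_less_numeral order_less_le_trans)
  have "real (cdim ?G) / real (cdim ?H) \<le> 2 / (2 / \<epsilon>)"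
    using cdim_G cdim_H assms by (intro frac_le) auto
  then have "real (cdim ?G) / real (cdim ?H) \<le> \<epsilon>" by simp
  with \<open>0 < cdim ?H\<close> show ?thesis
    using is_graph_threshold_graph H induced_subgraph_edgeless_threshold_graph[OF k(1)] by blast
qed

end
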